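(* Let $N = n+1 \geq 4$ be even and let $\boldsymbol{\lambda} = (\lambda_1,\dots,\lambda_N) \in \Lambda_N$. Let $V_N = \{\mathbf{v}_0,\dots,\mathbf{v}_N\} \subset \mathbb{R}^n$ with $\mathbf{v}_0 = \mathbf{0}$ and $\mathbf{v}_i = \lambda_i(\mathbf{e}_{i-1} - \mathbf{e}_i)$ for $1 \le i \le N$, and let $G^{\mathbf{0}}_{\boldsymbol{\lambda}} = \operatorname{conv} V_N$. Then $G^{\mathbf{0}}_{\boldsymbol{\lambda}}$ has exactly two triangulations (with vertices among $V_N$), namely \[ \Delta_+(G^{\mathbf{0}}_{\boldsymbol{\lambda}}) = \{\operatorname{conv}(V_N \setminus \{\mathbf{v}_i\}) \mid 1\le i\le N,\ \lambda_i = \lambda_1\} \] and \[ \Delta_-(G^{\mathbf{0}}_{\boldsymbol{\lambda}}) = \{\operatorname{conv}(V_N \setminus \{\mathbf{v}_i\}) \mid 1\le i\le N,\ \lambda_i = -\lambda_1\}. \] Moreover, both of these triangulations are regular.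
   Context: $\mathbf{e}_1,\dots,\mathbf{e}_n$ is the standard basis of $\mathbb{R}^n$, and by convention $\mathbf{e}_0 = \mathbf{e}_{n+1} = \mathbf{e}_N = \mathbf{0}$. For even $N$, $\Lambda_N = \{(\lambda_1,\dots,\lambda_N) \in \{-1,1\}^N \mid \sum_{i=1}^N \lambda_i = 0\}$. A triangulation of a polytope is a subdivision into simplices; it is regular if it is the projection to $\mathbb{R}^n$ of the lower facets (facets whose inner normal has positive last coordinate) of the lifted polytope $\operatorname{conv}\{(\mathbf{v}, h(\mathbf{v}))\}$ for some height function $h$ on the vertices. *)

theory Defs
  imports "HOL-Analysis.Analysis"
begin

definition Lambda :: "nat \<Rightarrow> (nat \<Rightarrow> real) set" where
  "Lambda N = {lam. (\<forall>i\<in>{1..N}. lam i \<in> {-1, 1}) \<and> (\<Sum>i=1..N. lam i) = 0}"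

text \<open>Standard basis e_1..e_n of real^'n, where the coordinates of 'n are
  enumerated by the bijection idx : {1..n} -> UNIV; e_i = 0 for i outside 1..n
  (so e_0 = e_{n+1} = e_N = 0).\<close>
definition ebasis :: "(nat \<Rightarrow> 'n::finite) \<Rightarrow> nat \<Rightarrow> nat \<Rightarrow> real ^ 'n" where
  "ebasis idx n i = (if 1 \<le> i \<and> i \<le> n then axis (idx i) 1 else 0)"

definition vpt :: "(nat \<Rightarrow> 'n::finite) \<Rightarrow> nat \<Rightarrow> (nat \<Rightarrow> real) \<Rightarrow> nat \<Rightarrow> real ^ 'n" where
  "vpt idx n lam i = (if i = 0 then 0 else lam i *\<^sub>R (ebasis idx n (i - 1) - ebasis idx n i))"

definition triangulation :: "'a::euclidean_space set \<Rightarrow> 'a set set \<Rightarrow> bool" where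
  "triangulation A T \<longleftrightarrow> finite T \<and>
     (\<forall>S\<in>T. \<exists>B. B \<subseteq> A \<and> \<not> affine_dependent B \<and>
                 int (card B) = aff_dim (convex hull A) + 1 \<and> S = convex hull B) \<and>
     \<Union>T = convex hull A \<and>
     (\<forall>S\<in>T. \<forall>S'\<in>T. (S \<inter> S') face_of S \<and> (S \<inter> S') face_of S')"

definition lower_facet :: "('a::euclidean_space \<times> real) set \<Rightarrow> ('a \<times> real) set \<Rightarrow> bool" where
  "lower_facet P F \<longleftrightarrow> F face_of P \<and> aff_dim F = aff_dim P - 1 \<and>
     (\<exists>a c b. c > 0 \<and> (\<forall>x\<in>P. inner (a, c) x \<ge> b) \<and> F = {x\<in>P. inner (a, c) x = b})"

definition regular_triangulation :: "'a::euclidean_space set \<Rightarrow> 'a set set \<Rightarrow> bool" where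
  "regular_triangulation A T \<longleftrightarrow> triangulation A T \<and>
     (\<exists>h :: 'a \<Rightarrow> real.
        T = (\<lambda>F. fst ` F) ` {F. lower_facet (convex hull ((\<lambda>v. (v, h v)) ` A)) F})"

end

(*
  The points v_0, ..., v_N are N + 1 points spanning R^(N-1), and their affine dependences are
  exactly the multiples of z = (0, lambda_1, ..., lambda_N).  The argument works for any finite
  configuration p_i (i in I) of corank one, i.e. whose affine dependences are the multiples of
  one vector z, provided z has at least two positive and two negative entries.  Convex weights of a point are then unique up to
  adding multiples of z.  Sliding the weights along z until the first positive entry, measured
  relative to z, vanishes shows that the simplices conv (p ` (I - {i})) with z_i > 0 cover the
  hull, and comparing two weight vectors shows that two such simplices meet in a common face; the
  same holds for z_i < 0.  Every full-dimensional simplex omits exactly one point with z_i <> 0,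
  and two simplices of opposite signs never meet in a common face: the normalized positive and
  negative parts of z are two weight vectors of one point lying in both simplices but outside
  their common facet.  So there are exactly the two triangulations.  For regularity lift p_i to
  height z_i.  The lifted points are affinely independent, and pairing a supporting functional
  (a, c) of the facet omitting p_j with the dependence gives
  z_j * (value at the lifted p_j - b) = c * (sum of z_i^2), so the facet is a lower one exactly
  when z_j > 0.
*)

theory Submission
  imports Defs
begin

lemma affine_dependent_image_iff:
  fixes f :: "'i \<Rightarrow> 'a::real_vector"
  assumes "finite I" "inj_on f I"
  shows "affine_dependent (f ` I) \<longleftrightarrow>
    (\<exists>d. sum d I = 0 \<and> (\<exists>i\<in>I. d i \<noteq> 0) \<and> (\<Sum>i\<in>I. d i *\<^sub>R f i) = 0)"
proof
  assume "affine_dependent (f ` I)"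
  then obtain u where "sum u (f ` I) = 0" "\<exists>x\<in>f ` I. u x \<noteq> 0" "(\<Sum>x\<in>f ` I. u x *\<^sub>R x) = 0"
    using affine_dependent_explicit_finite[OF finite_imageI[OF assms(1)]] by blast
  then show "\<exists>d. sum d I = 0 \<and> (\<exists>i\<in>I. d i \<noteq> 0) \<and> (\<Sum>i\<in>I. d i *\<^sub>R f i) = 0"
    by (intro exI[of _ "u \<circ> f"]) (auto simp: sum.reindex[OF assms(2)])
next
  assume "\<exists>d. sum d I = 0 \<and> (\<exists>i\<in>I. d i \<noteq> 0) \<and> (\<Sum>i\<in>I. d i *\<^sub>R f i) = 0"
  then obtain d where d: "sum d I = 0" "\<exists>i\<in>I. d i \<noteq> 0" "(\<Sum>i\<in>I. d i *\<^sub>R f i) = 0"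
    by blast
  have "(d \<circ> inv_into I f) (f i) = d i" if "i \<in> I" for i
    using inv_into_f_f[OF assms(2) that] by simp
  then have "sum (d \<circ> inv_into I f) (f ` I) = 0" "\<exists>y\<in>f ` I. (d \<circ> inv_into I f) y \<noteq> 0"
    "(\<Sum>y\<in>f ` I. (d \<circ> inv_into I f) y *\<^sub>R y) = 0"
    using d by (simp_all add: sum.reindex[OF assms(2)])
  then show "affine_dependent (f ` I)"
    using affine_dependent_explicit_finite[OF finite_imageI[OF assms(1)]] by blast
qed

lemma mem_convex_hull_image_iff:
  fixes f :: "'i \<Rightarrow> 'a::real_vector"
  assumes "finite I" "inj_on f I"
  shows "x \<in> convex hull (f ` I) \<longleftrightarrow>
    (\<exists>\<mu>. (\<forall>i\<in>I. 0 \<le> \<mu> i) \<and> sum \<mu> I = 1 \<and> (\<Sum>i\<in>I. \<mu> i *\<^sub>R f i) = x)"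
proof
  assume "x \<in> convex hull (f ` I)"
  then obtain u where "\<forall>y\<in>f ` I. 0 \<le> u y" "sum u (f ` I) = 1" "(\<Sum>y\<in>f ` I. u y *\<^sub>R y) = x"
    using convex_hull_finite[OF finite_imageI[OF assms(1)]] by blast
  then show "\<exists>\<mu>. (\<forall>i\<in>I. 0 \<le> \<mu> i) \<and> sum \<mu> I = 1 \<and> (\<Sum>i\<in>I. \<mu> i *\<^sub>R f i) = x"
    by (intro exI[of _ "u \<circ> f"]) (auto simp: sum.reindex[OF assms(2)])
next
  assume "\<exists>\<mu>. (\<forall>i\<in>I. 0 \<le> \<mu> i) \<and> sum \<mu> I = 1 \<and> (\<Sum>i\<in>I. \<mu> i *\<^sub>R f i) = x"
  then obtain \<mu> where \<mu>: "\<forall>i\<in>I. 0 \<le> \<mu> i" "sum \<mu> I = 1" "x = (\<Sum>i\<in>I. \<mu> i *\<^sub>R f i)"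
    by auto
  show "x \<in> convex hull (f ` I)"
    unfolding \<mu>(3) by (rule convex_sum[OF assms(1) convex_convex_hull]) (use \<mu> in \<open>auto intro: hull_inc\<close>)
qed

lemma exists_not_in_if_card_less:
  assumes "finite F" "card F < card S"
  shows "\<exists>x\<in>S. x \<notin> F"
proof (rule ccontr)
  assume "\<not> (\<exists>x\<in>S. x \<notin> F)"
  then have "card S \<le> card F"
    using assms(1) by (intro card_mono) auto
  with assms(2) show False by simp
qed

lemma card_Suc_subset_obtains_Diff_singleton:
  assumes "finite A" "B \<subseteq> A" "card A = Suc (card B)"
  obtains a where "a \<in> A" "B = A - {a}"
proof -
  obtain a where a: "a \<in> A" "a \<notin> B"
    using exists_not_in_if_card_less[OF finite_subset[OF assms(2,1)], of A] assms(3) by auto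
  have "B = A - {a}"
    using assms a by (intro card_subset_eq) auto
  with a(1) show thesis by (rule that)
qed

lemma mult_neg_same_sign:
  fixes c a b :: real
  shows "c * a < 0 \<Longrightarrow> 0 < a * b \<Longrightarrow> c * b < 0"
  by (auto simp: mult_less_0_iff zero_less_mult_iff)

lemma lower_facet_iff_facet_of:
  fixes P :: "('a::euclidean_space \<times> real) set"
  assumes "0 < aff_dim P"
  shows "lower_facet P F \<longleftrightarrow> F facet_of P \<and>
    (\<exists>a c b. c > 0 \<and> (\<forall>x\<in>P. inner (a, c) x \<ge> b) \<and> F = {x\<in>P. inner (a, c) x = b})"
proof -
  have "F \<noteq> {}" if "aff_dim F = aff_dim P - 1"
  proof
    assume "F = {}"
    with that assms show False by simp
  qed
  then show ?thesis unfolding lower_facet_def facet_of_def by blast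
qed

lemma triangulationD:
  assumes "triangulation A T"
  shows "\<Union>T = convex hull A"
    and "S \<in> T \<Longrightarrow> S' \<in> T \<Longrightarrow> (S \<inter> S') face_of S"
    and "S \<in> T \<Longrightarrow> \<exists>B. B \<subseteq> A \<and> \<not> affine_dependent B \<and>
           int (card B) = aff_dim (convex hull A) + 1 \<and> S = convex hull B"
  using assms unfolding triangulation_def by blast+

section \<open>Point configurations of corank one\<close>

locale corank_one =
  fixes I :: "'i set" and p :: "'i \<Rightarrow> 'a::euclidean_space" and z :: "'i \<Rightarrow> real"
  assumes finite_I: "finite I"
    and sum_z: "sum z I = 0"
    and dependence: "(\<Sum>i\<in>I. z i *\<^sub>R p i) = 0"
    and dependence_unique:
      "\<And>d. sum d I = 0 \<Longrightarrow> (\<Sum>i\<in>I. d i *\<^sub>R p i) = 0 \<Longrightarrow> \<exists>c. \<forall>i\<in>I. d i = c * z i"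
    and two_positive: "2 \<le> card {i\<in>I. 0 < z i}"
    and two_negative: "2 \<le> card {i\<in>I. z i < 0}"
begin

lemma corank_one_scale:
  assumes "c \<noteq> 0"
  shows "corank_one I p (\<lambda>i. c * z i)"
proof
  show "finite I" by (rule finite_I)
  show "(\<Sum>i\<in>I. c * z i) = 0"
    using sum_z by (simp add: flip: sum_distrib_left)
  show "(\<Sum>i\<in>I. (c * z i) *\<^sub>R p i) = 0"
    using dependence by (simp add: flip: scaleR_scaleR scaleR_sum_right)
  show "\<exists>c'. \<forall>i\<in>I. d i = c' * (c * z i)"
    if d: "sum d I = 0" "(\<Sum>i\<in>I. d i *\<^sub>R p i) = 0" for d
  proof -
    obtain c' where "\<forall>i\<in>I. d i = c' * z i" using dependence_unique d by blast
    then show ?thesis using assms by (intro exI[of _ "c' / c"]) simp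
  qed
  have "{i\<in>I. 0 < c * z i} = (if 0 < c then {i\<in>I. 0 < z i} else {i\<in>I. z i < 0})"
    "{i\<in>I. c * z i < 0} = (if 0 < c then {i\<in>I. z i < 0} else {i\<in>I. 0 < z i})"
    using assms by (auto simp: zero_less_mult_iff mult_less_0_iff)
  then show "2 \<le> card {i\<in>I. 0 < c * z i}" "2 \<le> card {i\<in>I. c * z i < 0}"
    using two_positive two_negative by simp_all
qed

lemma exists_same_sign:
  assumes "j \<in> I" "z j \<noteq> 0"
  shows "\<exists>m\<in>I. m \<noteq> j \<and> 0 < z j * z m"
proof (cases "0 < z j")
  case True
  then show ?thesis
    using exists_not_in_if_card_less[of "{j}" "{i\<in>I. 0 < z i}"] two_positive by force
next
  case False
  then show ?thesis
    using exists_not_in_if_card_less[of "{j}" "{i\<in>I. z i < 0}"] two_negative assms(2)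
    by (force simp: zero_less_mult_iff)
qed

lemma four_le_card_support: "4 \<le> card {i\<in>I. z i \<noteq> 0}"
proof -
  have "{i\<in>I. z i \<noteq> 0} = {i\<in>I. 0 < z i} \<union> {i\<in>I. z i < 0}" by auto
  then show ?thesis
    using two_positive two_negative finite_I by (simp add: card_Un_disjoint disjoint_iff)
qed

lemma exists_positive: "\<exists>i\<in>I. 0 < z i"
  using exists_not_in_if_card_less[of "{}" "{i\<in>I. 0 < z i}"] two_positive by auto

lemma four_le_card: "4 \<le> card I"
  using four_le_card_support card_mono[OF finite_I, of "{i\<in>I. z i \<noteq> 0}"] by auto

lemma inj_on_p: "inj_on p I"
proof
  fix i k assume ik: "i \<in> I" "k \<in> I" "p i = p k"
  show "i = k"
  proof (rule ccontr)
    assume "i \<noteq> k"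
    define d where "d m = (if m = i then 1 else 0) - (if m = k then 1 else 0 :: real)" for m
    have "sum d I = 0" "(\<Sum>m\<in>I. d m *\<^sub>R p m) = 0"
      using ik finite_I
      by (simp_all add: d_def sum_subtractf scaleR_diff_left if_distrib[of "\<lambda>c. c *\<^sub>R _"] cong: if_cong)
    then obtain c where c: "\<forall>m\<in>I. d m = c * z m" using dependence_unique by blast
    have "card {i, k} < card {i\<in>I. z i \<noteq> 0}" using four_le_card_support \<open>i \<noteq> k\<close> by simp
    then obtain m where "m \<in> I" "z m \<noteq> 0" "m \<noteq> i" "m \<noteq> k"
      using exists_not_in_if_card_less[of "{i, k}"] by blast
    then have "c * z m = 0" using c by (auto simp: d_def)
    then have "c = 0" using \<open>z m \<noteq> 0\<close> by simp
    moreover have "d i = c * z i" using c ik(1) by blast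
    ultimately show False using \<open>i \<noteq> k\<close> by (simp add: d_def)
  qed
qed

definition convex_weights :: "('i \<Rightarrow> real) \<Rightarrow> 'a \<Rightarrow> bool" where
  "convex_weights \<mu> x \<longleftrightarrow> (\<forall>i\<in>I. 0 \<le> \<mu> i) \<and> sum \<mu> I = 1 \<and> (\<Sum>i\<in>I. \<mu> i *\<^sub>R p i) = x"

lemma mem_convex_hull_iff:
  assumes "J \<subseteq> I"
  shows "x \<in> convex hull (p ` J) \<longleftrightarrow> (\<exists>\<mu>. convex_weights \<mu> x \<and> (\<forall>i\<in>I - J. \<mu> i = 0))"
proof -
  have J: "finite J" "inj_on p J"
    using finite_subset[OF assms finite_I] inj_on_subset[OF inj_on_p assms] .
  have sum_J: "sum g I = sum g J" if "\<forall>i\<in>I - J. g i = 0" for g :: "'i \<Rightarrow> 'b::comm_monoid_add"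
    using that assms finite_I by (intro sum.mono_neutral_right) auto
  show ?thesis
  proof
    assume "x \<in> convex hull (p ` J)"
    then obtain \<mu> where \<mu>: "\<forall>i\<in>J. 0 \<le> \<mu> i" "sum \<mu> J = 1" "(\<Sum>i\<in>J. \<mu> i *\<^sub>R p i) = x"
      using mem_convex_hull_image_iff[OF J] by blast
    define \<mu>' where "\<mu>' i = (if i \<in> J then \<mu> i else 0)" for i
    have "sum \<mu>' I = sum \<mu>' J" "(\<Sum>i\<in>I. \<mu>' i *\<^sub>R p i) = (\<Sum>i\<in>J. \<mu>' i *\<^sub>R p i)"
      by (intro sum_J, simp add: \<mu>'_def)+
    then have "convex_weights \<mu>' x"
      using \<mu> by (simp add: convex_weights_def \<mu>'_def)
    then show "\<exists>\<mu>. convex_weights \<mu> x \<and> (\<forall>i\<in>I - J. \<mu> i = 0)"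
      by (auto simp: \<mu>'_def)
  next
    assume "\<exists>\<mu>. convex_weights \<mu> x \<and> (\<forall>i\<in>I - J. \<mu> i = 0)"
    then obtain \<mu> where \<mu>: "convex_weights \<mu> x" "\<forall>i\<in>I - J. \<mu> i = 0" by blast
    then have "sum \<mu> J = 1" "(\<Sum>i\<in>J. \<mu> i *\<^sub>R p i) = x"
      using sum_J[of \<mu>] sum_J[of "\<lambda>i. \<mu> i *\<^sub>R p i"] by (auto simp: convex_weights_def)
    then show "x \<in> convex hull (p ` J)"
      unfolding mem_convex_hull_image_iff[OF J]
      using \<mu> assms by (intro exI[of _ \<mu>]) (auto simp: convex_weights_def)
  qed
qed

lemma convex_weights_diff:
  assumes "convex_weights \<mu> x" "convex_weights \<nu> x"
  obtains c where "\<And>i. i \<in> I \<Longrightarrow> \<nu> i = \<mu> i + c * z i"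
proof -
  have "sum (\<lambda>i. \<nu> i - \<mu> i) I = 0" "(\<Sum>i\<in>I. (\<nu> i - \<mu> i) *\<^sub>R p i) = 0"
    using assms by (simp_all add: convex_weights_def sum_subtractf scaleR_diff_left)
  then obtain c where "\<forall>i\<in>I. \<nu> i - \<mu> i = c * z i"
    using dependence_unique by blast
  then show thesis by (intro that[of c]) (simp add: algebra_simps)
qed

lemma convex_weights_eqI:
  assumes "convex_weights \<mu> x" "convex_weights \<nu> x"
    and "j \<in> I" "z j \<noteq> 0" "\<mu> j = \<nu> j" "i \<in> I"
  shows "\<mu> i = \<nu> i"
proof -
  obtain c where c: "\<And>i. i \<in> I \<Longrightarrow> \<nu> i = \<mu> i + c * z i"
    using convex_weights_diff[OF assms(1,2)] by blast
  then have "c = 0" using assms(3-5) by force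
  then show ?thesis using c assms(6) by simp
qed

definition cell :: "'i \<Rightarrow> 'a set" where
  "cell j = convex hull (p ` (I - {j}))"

lemma cell_eq_convex_hull_Diff: "j \<in> I \<Longrightarrow> cell j = convex hull (p ` I - {p j})"
  by (simp add: cell_def inj_on_image_set_diff[OF inj_on_p])

lemma setcompr_convex_hull_Diff_eq_cells:
  "{convex hull (p ` I - {p i}) | i. i \<in> I \<and> P i} = cell ` {i\<in>I. P i}"
  by (auto simp: cell_eq_convex_hull_Diff)

lemma mem_cell_iff: "j \<in> I \<Longrightarrow> x \<in> cell j \<longleftrightarrow> (\<exists>\<mu>. convex_weights \<mu> x \<and> \<mu> j = 0)"
  unfolding cell_def by (subst mem_convex_hull_iff) auto

lemma point_in_cell: "i \<in> I \<Longrightarrow> i \<noteq> j \<Longrightarrow> p i \<in> cell j"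
  unfolding cell_def by (rule hull_inc) auto

lemma cell_subset_convex_hull: "cell j \<subseteq> convex hull (p ` I)"
  unfolding cell_def by (intro hull_mono image_mono) auto

lemma point_notin_own_cell:
  assumes j: "j \<in> I" "z j \<noteq> 0"
  shows "p j \<notin> cell j"
proof
  assume "p j \<in> cell j"
  then obtain \<nu> where \<nu>: "convex_weights \<nu> (p j)" "\<nu> j = 0"
    using mem_cell_iff j by blast
  have "convex_weights (\<lambda>i. if i = j then 1 else 0) (p j)"
    using j finite_I by (simp add: convex_weights_def if_distrib[of "\<lambda>c. c *\<^sub>R _"] cong: if_cong)
  then obtain c where c: "\<And>i. i \<in> I \<Longrightarrow> \<nu> i = (if i = j then 1 else 0) + c * z i"
    using convex_weights_diff \<nu>(1) by blast
  obtain m where m: "m \<in> I" "m \<noteq> j" "0 < z j * z m"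
    using exists_same_sign j by blast
  have "c * z j < 0" using c[of j] \<nu>(2) j by simp
  then have "\<nu> m < 0" using c[of m] m mult_neg_same_sign by simp
  then show False using \<nu>(1) m(1) by (simp add: convex_weights_def not_le[symmetric])
qed

lemma affine_independent_cell_vertices:
  assumes j: "j \<in> I" "z j \<noteq> 0"
  shows "\<not> affine_dependent (p ` (I - {j}))"
proof
  have fin_inj: "finite (I - {j})" "inj_on p (I - {j})"
    using finite_I inj_on_subset[OF inj_on_p] by auto
  assume "affine_dependent (p ` (I - {j}))"
  then obtain d i where d: "sum d (I - {j}) = 0" "(\<Sum>i\<in>I - {j}. d i *\<^sub>R p i) = 0"
    and i: "i \<in> I - {j}" "d i \<noteq> 0"
    unfolding affine_dependent_image_iff[OF fin_inj] by blast
  define d' where "d' m = (if m = j then 0 else d m)" for m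
  have "sum d' I = 0" "(\<Sum>m\<in>I. d' m *\<^sub>R p m) = 0"
    using d by (simp_all add: sum.remove[OF finite_I j(1)] d'_def)
  then obtain c where c: "\<forall>m\<in>I. d' m = c * z m"
    using dependence_unique by blast
  then have "c = 0" using j by (auto simp: d'_def)
  then show False using c i by (auto simp: d'_def)
qed

lemma affine_dependent_cell_vertices:
  assumes j: "j \<in> I" "z j = 0"
  shows "affine_dependent (p ` (I - {j}))"
proof -
  have fin_inj: "finite (I - {j})" "inj_on p (I - {j})"
    using finite_I inj_on_subset[OF inj_on_p] by auto
  obtain i where "i \<in> I" "0 < z i" using exists_positive by blast
  then show ?thesis
    unfolding affine_dependent_image_iff[OF fin_inj]
    using j finite_I sum_z dependence
    by (intro exI[of _ z] conjI bexI[of _ i]) (auto simp: sum_diff1)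
qed

lemma aff_dim_points: "aff_dim (p ` I) = int (card I) - 2"
proof -
  obtain j where j: "j \<in> I" "0 < z j" using exists_positive by blast
  have card_p: "card (p ` J) = card J" if "J \<subseteq> I" for J
    using card_image inj_on_subset[OF inj_on_p that] by blast
  have indep: "\<not> affine_dependent (p ` (I - {j}))"
    using affine_independent_cell_vertices j by simp
  have "int (card I) - 2 = aff_dim (p ` (I - {j}))"
    using aff_dim_affine_independent[OF indep] card_p[of "I - {j}"] j(1) finite_I four_le_card
    by (simp add: of_nat_diff)
  also have "\<dots> \<le> aff_dim (p ` I)"
    by (intro aff_dim_subset image_mono) auto
  finally have lower: "int (card I) - 2 \<le> aff_dim (p ` I)" .
  have "affine_dependent (p ` I)"
    unfolding affine_dependent_image_iff[OF finite_I inj_on_p]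
    using sum_z dependence j by (intro exI[of _ z] conjI bexI[of _ j]) auto
  then have "aff_dim (p ` I) \<noteq> int (card (p ` I)) - 1"
    using affine_independent_iff_card[of "p ` I"] finite_I by simp
  moreover have "aff_dim (p ` I) \<le> int (card (p ` I)) - 1"
    using aff_dim_le_card[of "p ` I"] finite_I by simp
  moreover have "card (p ` I) = card I"
    using card_p by blast
  ultimately show ?thesis using lower by linarith
qed

lemma full_dim_simplex_vertices:
  assumes "B \<subseteq> p ` I" "\<not> affine_dependent B"
    and "int (card B) = aff_dim (convex hull (p ` I)) + 1"
  obtains j where "j \<in> I" "z j \<noteq> 0" "B = p ` (I - {j})"
proof -
  have "card (p ` I) = Suc (card B)"
    using assms(3) aff_dim_points four_le_card card_image[OF inj_on_p] by (simp add: aff_dim_convex_hull)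
  then obtain j where j: "j \<in> I" "B = p ` I - {p j}"
    using card_Suc_subset_obtains_Diff_singleton[OF finite_imageI[OF finite_I] assms(1)] by blast
  then have "B = p ` (I - {j})"
    by (simp add: inj_on_image_set_diff[OF inj_on_p])
  moreover have "z j \<noteq> 0"
    using affine_dependent_cell_vertices[OF j(1)] assms(2) calculation by blast
  ultimately show thesis using that j(1) by blast
qed

lemma cell_Int_cell_same_sign:
  assumes jk: "j \<in> I" "k \<in> I" "0 < z j * z k"
  shows "cell j \<inter> cell k = convex hull (p ` (I - {j, k}))"
proof
  show "cell j \<inter> cell k \<subseteq> convex hull (p ` (I - {j, k}))"
  proof
    fix x assume "x \<in> cell j \<inter> cell k"
    then have "x \<in> cell j" "x \<in> cell k" by auto
    then obtain \<mu> \<nu> where \<mu>: "convex_weights \<mu> x" "\<mu> j = 0" and \<nu>: "convex_weights \<nu> x" "\<nu> k = 0"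
      using mem_cell_iff jk(1,2) by blast
    obtain c where c: "\<And>i. i \<in> I \<Longrightarrow> \<nu> i = \<mu> i + c * z i"
      using convex_weights_diff[OF \<mu>(1) \<nu>(1)] by blast
    have "0 \<le> \<mu> k" "0 \<le> \<nu> j" using \<mu>(1) \<nu>(1) jk by (auto simp: convex_weights_def)
    have "\<not> c * z k < 0"
    proof
      assume "c * z k < 0"
      moreover have "0 < z k * z j" using jk(3) by (simp add: mult.commute)
      ultimately have "c * z j < 0" by (rule mult_neg_same_sign)
      then show False using c[of j] \<mu>(2) \<open>0 \<le> \<nu> j\<close> jk(1) by simp
    qed
    then have "\<mu> k = 0"
      using c[of k] \<nu>(2) \<open>0 \<le> \<mu> k\<close> jk(2) by linarith
    then show "x \<in> convex hull (p ` (I - {j, k}))"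
      using mem_convex_hull_iff[of "I - {j, k}"] \<mu> by auto
  qed
  show "convex hull (p ` (I - {j, k})) \<subseteq> cell j \<inter> cell k"
    unfolding cell_def by (intro Int_greatest hull_mono image_mono) auto
qed

lemma face_of_cell_iff:
  assumes "j \<in> I" "z j \<noteq> 0"
  shows "T face_of cell j \<longleftrightarrow> (\<exists>C. C \<subseteq> p ` (I - {j}) \<and> T = convex hull C)"
  unfolding cell_def
  by (rule face_of_convex_hull_affine_independent[OF affine_independent_cell_vertices[OF assms]])

lemma face_of_cell_Int_same_sign:
  assumes "j \<in> I" "k \<in> I" "0 < z j * z k"
  shows "(cell j \<inter> cell k) face_of cell j"
proof -
  have "z j \<noteq> 0" using assms(3) by auto
  then show ?thesis
    unfolding face_of_cell_iff[OF assms(1) \<open>z j \<noteq> 0\<close>] cell_Int_cell_same_sign[OF assms]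
    by (intro exI[of _ "p ` (I - {j, k})"]) auto
qed

lemma convex_weights_sign_parts:
  obtains s q where "0 < s" "convex_weights (\<lambda>i. max (z i) 0 / s) q"
    "convex_weights (\<lambda>i. max (- z i) 0 / s) q"
proof -
  define s where "s = (\<Sum>i\<in>I. max (z i) 0)"
  have "0 < s"
    using exists_positive finite_I unfolding s_def by (auto intro: sum_pos2)
  define \<mu> where "\<mu> i = max (z i) 0 / s" for i
  define q where "q = (\<Sum>i\<in>I. \<mu> i *\<^sub>R p i)"
  have "sum \<mu> I = 1"
    using \<open>0 < s\<close> by (simp add: \<mu>_def s_def flip: sum_divide_distrib)
  then have pos: "convex_weights \<mu> q"
    using \<open>0 < s\<close> by (simp add: convex_weights_def \<mu>_def q_def)
  have "(\<Sum>i\<in>I. z i / s) = (\<Sum>i\<in>I. z i) / s"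
    by (rule sum_divide_distrib[symmetric])
  moreover have "(\<Sum>i\<in>I. (z i / s) *\<^sub>R p i) = (1 / s) *\<^sub>R (\<Sum>i\<in>I. z i *\<^sub>R p i)"
    by (simp add: scaleR_sum_right)
  ultimately have "(\<Sum>i\<in>I. z i / s) = 0" "(\<Sum>i\<in>I. (z i / s) *\<^sub>R p i) = 0"
    using sum_z dependence by simp_all
  moreover have "max (- z i) 0 / s = \<mu> i - z i / s" "z i / s \<le> \<mu> i" for i
    using \<open>0 < s\<close> by (auto simp: \<mu>_def max_def diff_divide_distrib[symmetric] divide_right_mono)
  ultimately have "convex_weights (\<lambda>i. max (- z i) 0 / s) q"
    using pos \<open>0 < s\<close> by (simp add: convex_weights_def sum_subtractf scaleR_diff_left)
  with \<open>0 < s\<close> pos[unfolded \<mu>_def[abs_def]] show thesis by (rule that)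
qed

lemma cell_Int_cell_opposite_sign_not_subset:
  assumes jk: "j \<in> I" "k \<in> I" "z j * z k < 0"
  shows "\<not> cell j \<inter> cell k \<subseteq> convex hull (p ` (I - {j, k}))"
proof
  assume small: "cell j \<inter> cell k \<subseteq> convex hull (p ` (I - {j, k}))"
  obtain s q where s: "0 < s" and pos: "convex_weights (\<lambda>i. max (z i) 0 / s) q"
    and neg: "convex_weights (\<lambda>i. max (- z i) 0 / s) q"
    by (rule convex_weights_sign_parts)
  have "q \<in> cell i" if i: "i \<in> {j, k}" for i
  proof -
    have "i \<in> I" using i jk by auto
    show ?thesis
    proof (cases "z i < 0")
      case True
      with pos show ?thesis
        unfolding mem_cell_iff[OF \<open>i \<in> I\<close>] by (intro exI[of _ "\<lambda>i. max (z i) 0 / s"]) simp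
    next
      case False
      with neg show ?thesis
        unfolding mem_cell_iff[OF \<open>i \<in> I\<close>] by (intro exI[of _ "\<lambda>i. max (- z i) 0 / s"]) simp
    qed
  qed
  then have "q \<in> convex hull (p ` (I - {j, k}))" using small by blast
  moreover have "I - {j, k} \<subseteq> I" by blast
  ultimately obtain \<rho> where \<rho>: "convex_weights \<rho> q" "\<forall>i\<in>I - (I - {j, k}). \<rho> i = 0"
    using mem_convex_hull_iff by blast
  have "z j < 0 \<and> 0 < z k \<or> 0 < z j \<and> z k < 0"
    using jk(3) by (auto simp: mult_less_0_iff)
  then obtain a b where ab: "a \<in> I" "z a < 0" "\<rho> a = 0" "b \<in> I" "0 < z b" "\<rho> b = 0"
    using jk(1,2) \<rho>(2) by auto
  then have "max (z b) 0 / s = \<rho> b"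
    using convex_weights_eqI[OF pos \<rho>(1) ab(1) _ _ ab(4)] by simp
  with ab(5,6) s show False by simp
qed

lemma not_face_of_cell_Int_opposite_sign:
  assumes jk: "j \<in> I" "k \<in> I" "z j * z k < 0"
  shows "\<not> (cell j \<inter> cell k) face_of cell j"
proof
  have nz: "z j \<noteq> 0" "z k \<noteq> 0" using jk(3) by auto
  assume "(cell j \<inter> cell k) face_of cell j"
  then obtain C where C: "C \<subseteq> p ` (I - {j})" "cell j \<inter> cell k = convex hull C"
    unfolding face_of_cell_iff[OF jk(1) nz(1)] by blast
  have "p k \<notin> C"
  proof
    assume "p k \<in> C"
    then have "p k \<in> cell j \<inter> cell k" unfolding C(2) by (rule hull_inc)
    then show False using point_notin_own_cell[OF jk(2) nz(2)] by simp
  qed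
  then have "C \<subseteq> p ` (I - {j, k})" using C(1) by blast
  then have "cell j \<inter> cell k \<subseteq> convex hull (p ` (I - {j, k}))"
    unfolding C(2) by (rule hull_mono)
  with cell_Int_cell_opposite_sign_not_subset[OF jk] show False by blast
qed

section \<open>The two triangulations\<close>

lemma positive_cells_cover:
  assumes "x \<in> convex hull (p ` I)"
  obtains k where "k \<in> I" "0 < z k" "x \<in> cell k"
proof -
  obtain \<mu> where \<mu>: "convex_weights \<mu> x"
    using assms mem_convex_hull_iff[OF order_refl] by blast
  define P where "P = {i\<in>I. 0 < z i}"
  have P: "finite P" "P \<noteq> {}"
    using finite_I exists_positive by (auto simp: P_def)
  text \<open>Slide along the dependence until the first positive weight, relative to z, vanishes.\<close>
  define k where "k = arg_min_on (\<lambda>i. \<mu> i / z i) P"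
  have "k \<in> P" unfolding k_def by (rule arg_min_if_finite(1)[OF P])
  then have k: "k \<in> I" "0 < z k" by (simp_all add: P_def)
  have k_min: "\<mu> k / z k \<le> \<mu> i / z i" if "i \<in> P" for i
    using arg_min_least[OF P that, of "\<lambda>i. \<mu> i / z i"] by (simp add: k_def)
  define t where "t = \<mu> k / z k"
  have "0 \<le> t" using k \<mu> by (simp add: t_def convex_weights_def)
  define \<nu> where "\<nu> i = \<mu> i - t * z i" for i
  have "0 \<le> \<nu> i" if "i \<in> I" for i
  proof (cases "0 < z i")
    case True
    then have "t \<le> \<mu> i / z i" using k_min that by (simp add: t_def P_def)
    then show ?thesis using True by (simp add: \<nu>_def pos_le_divide_eq)
  next
    case False
    then have "t * z i \<le> 0" using \<open>0 \<le> t\<close> by (simp add: mult_nonneg_nonpos)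
    moreover have "0 \<le> \<mu> i" using \<mu> that by (simp add: convex_weights_def)
    ultimately show ?thesis by (simp add: \<nu>_def)
  qed
  moreover have "sum \<nu> I = 1" "(\<Sum>i\<in>I. \<nu> i *\<^sub>R p i) = x"
    using \<mu> sum_z dependence
    by (simp_all add: \<nu>_def convex_weights_def sum_subtractf scaleR_diff_left
        flip: sum_distrib_left scaleR_scaleR scaleR_sum_right)
  ultimately have "convex_weights \<nu> x" by (simp add: convex_weights_def)
  moreover have "\<nu> k = 0" using k by (simp add: \<nu>_def t_def)
  ultimately have "x \<in> cell k"
    unfolding mem_cell_iff[OF k(1)] by blast
  with k show thesis by (rule that)
qed

lemma triangulation_positive_cells: "triangulation (p ` I) (cell ` {i\<in>I. 0 < z i})"
  unfolding triangulation_def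
proof (intro conjI ballI)
  show "finite (cell ` {i\<in>I. 0 < z i})" using finite_I by simp
next
  fix S assume "S \<in> cell ` {i\<in>I. 0 < z i}"
  then obtain j where j: "j \<in> I" "0 < z j" "S = cell j" by blast
  have "int (card (p ` (I - {j}))) = aff_dim (convex hull (p ` I)) + 1"
    using card_image[OF inj_on_subset[OF inj_on_p, of "I - {j}"]] finite_I j(1) four_le_card
    by (simp add: aff_dim_convex_hull aff_dim_points of_nat_diff)
  moreover have "\<not> affine_dependent (p ` (I - {j}))"
    using affine_independent_cell_vertices j(1,2) by simp
  ultimately show "\<exists>B. B \<subseteq> p ` I \<and> \<not> affine_dependent B \<and>
      int (card B) = aff_dim (convex hull (p ` I)) + 1 \<and> S = convex hull B"
    using j(3) by (intro exI[of _ "p ` (I - {j})"]) (auto simp: cell_def)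
next
  show "\<Union> (cell ` {i\<in>I. 0 < z i}) = convex hull (p ` I)"
  proof (rule antisym)
    show "\<Union> (cell ` {i\<in>I. 0 < z i}) \<subseteq> convex hull (p ` I)"
      using cell_subset_convex_hull by blast
    show "convex hull (p ` I) \<subseteq> \<Union> (cell ` {i\<in>I. 0 < z i})"
    proof
      fix x assume "x \<in> convex hull (p ` I)"
      then obtain k where "k \<in> I" "0 < z k" "x \<in> cell k" by (rule positive_cells_cover)
      then show "x \<in> \<Union> (cell ` {i\<in>I. 0 < z i})" by blast
    qed
  qed
next
  fix S S' assume "S \<in> cell ` {i\<in>I. 0 < z i}" "S' \<in> cell ` {i\<in>I. 0 < z i}"
  then obtain j k where "j \<in> I" "0 < z j" "S = cell j" "k \<in> I" "0 < z k" "S' = cell k" by blast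
  then show "(S \<inter> S') face_of S" using face_of_cell_Int_same_sign[of j k] by simp
next
  fix S S' assume "S \<in> cell ` {i\<in>I. 0 < z i}" "S' \<in> cell ` {i\<in>I. 0 < z i}"
  then obtain j k where "j \<in> I" "0 < z j" "S = cell j" "k \<in> I" "0 < z k" "S' = cell k" by blast
  then show "(S \<inter> S') face_of S'" using face_of_cell_Int_same_sign[of k j] by (simp add: Int_commute)
qed

lemma triangulation_cell_cases:
  assumes "triangulation (p ` I) T" "S \<in> T"
  obtains j where "j \<in> I" "z j \<noteq> 0" "S = cell j"
proof -
  obtain B where B: "B \<subseteq> p ` I" "\<not> affine_dependent B"
    "int (card B) = aff_dim (convex hull (p ` I)) + 1" "S = convex hull B"
    using triangulationD(3)[OF assms] by blast
  obtain j where "j \<in> I" "z j \<noteq> 0" "B = p ` (I - {j})"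
    by (rule full_dim_simplex_vertices[OF B(1-3)])
  with B(4) that show thesis by (simp add: cell_def)
qed

lemma triangulation_cells_same_sign:
  assumes T: "triangulation (p ` I) T" and j: "j \<in> I" "z j \<noteq> 0" "cell j \<in> T" and "S \<in> T"
  obtains k where "k \<in> I" "0 < z j * z k" "S = cell k"
proof -
  obtain k where k: "k \<in> I" "z k \<noteq> 0" "S = cell k"
    by (rule triangulation_cell_cases[OF T \<open>S \<in> T\<close>])
  have "(cell j \<inter> cell k) face_of cell j"
    using triangulationD(2)[OF T j(3) \<open>S \<in> T\<close>] k(3) by simp
  then have "\<not> z j * z k < 0"
    using not_face_of_cell_Int_opposite_sign[OF j(1) k(1)] by blast
  moreover have "z j * z k \<noteq> 0" using j(2) k(2) by simp
  ultimately have "0 < z j * z k" by linarith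
  with k that show thesis by blast
qed

lemma cell_in_triangulation:
  assumes T: "triangulation (p ` I) T" and k: "k \<in> I"
    and cells: "\<And>S. S \<in> T \<Longrightarrow> \<exists>m\<in>I. 0 < z k * z m \<and> S = cell m"
  shows "cell k \<in> T"
proof (rule ccontr)
  assume "cell k \<notin> T"
  define \<mu> where "\<mu> i = (if i = k then 0 else 1 / real (card I - 1))" for i
  define x where "x = (\<Sum>i\<in>I. \<mu> i *\<^sub>R p i)"
  have "sum \<mu> I = 1"
    using four_le_card k by (simp add: sum.remove[OF finite_I k] \<mu>_def of_nat_diff)
  then have w: "convex_weights \<mu> x"
    by (simp add: convex_weights_def \<mu>_def x_def)
  then have "x \<in> cell k"
    unfolding mem_cell_iff[OF k] by (intro exI[of _ \<mu>]) (simp add: \<mu>_def)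
  then have "x \<in> \<Union>T"
    using triangulationD(1)[OF T] cell_subset_convex_hull[of k] by blast
  then obtain m where m: "m \<in> I" "0 < z k * z m" "cell m \<in> T" "x \<in> cell m"
    using cells by blast
  then have "m \<noteq> k" using \<open>cell k \<notin> T\<close> by blast
  obtain \<nu> where \<nu>: "convex_weights \<nu> x" "\<nu> m = 0"
    using mem_cell_iff[OF m(1)] m(4) by blast
  obtain c where c: "\<And>i. i \<in> I \<Longrightarrow> \<nu> i = \<mu> i + c * z i"
    using convex_weights_diff[OF w \<nu>(1)] by blast
  have "0 < \<mu> m" using \<open>m \<noteq> k\<close> four_le_card by (simp add: \<mu>_def)
  then have "c * z m < 0" using c[OF m(1)] \<nu>(2) by linarith
  moreover have "0 < z m * z k" using m(2) by (simp add: mult.commute)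
  ultimately have "c * z k < 0" by (rule mult_neg_same_sign)
  then have "\<nu> k < 0" using c[OF k] by (simp add: \<mu>_def)
  then show False using \<nu>(1) k by (auto simp: convex_weights_def)
qed

lemma triangulation_eq_same_sign_cells:
  assumes T: "triangulation (p ` I) T"
  obtains j where "j \<in> I" "z j \<noteq> 0" "T = cell ` {i\<in>I. 0 < z j * z i}"
proof -
  have "I \<noteq> {}" using four_le_card by auto
  then have "\<Union>T \<noteq> {}" using triangulationD(1)[OF T] by simp
  then obtain S where "S \<in> T" by blast
  then obtain j where j: "j \<in> I" "z j \<noteq> 0" "S = cell j"
    by (rule triangulation_cell_cases[OF T])
  have "T \<subseteq> cell ` {i\<in>I. 0 < z j * z i}"
  proof
    fix S' assume "S' \<in> T"
    then obtain k where "k \<in> I" "0 < z j * z k" "S' = cell k"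
      using triangulation_cells_same_sign[OF T j(1,2)] j(3) \<open>S \<in> T\<close> by blast
    then show "S' \<in> cell ` {i\<in>I. 0 < z j * z i}" by blast
  qed
  moreover have "cell k \<in> T" if k: "k \<in> I" "0 < z j * z k" for k
  proof (rule cell_in_triangulation[OF T k(1)])
    fix S' assume "S' \<in> T"
    then obtain m where m: "m \<in> I" "0 < z j * z m" "S' = cell m"
      using triangulation_cells_same_sign[OF T j(1,2)] j(3) \<open>S \<in> T\<close> by blast
    have "0 < z k * z m" using k(2) m(2) by (auto simp: zero_less_mult_iff)
    with m show "\<exists>m\<in>I. 0 < z k * z m \<and> S' = cell m" by blast
  qed
  ultimately have "T = cell ` {i\<in>I. 0 < z j * z i}" by blast
  with j(1,2) show thesis by (rule that)
qed

theorem triangulations_eq: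
  "{T. triangulation (p ` I) T} = {cell ` {i\<in>I. 0 < z i}, cell ` {i\<in>I. z i < 0}}"
proof -
  interpret neg: corank_one I p "\<lambda>i. - z i"
    using corank_one_scale[of "-1"] by simp
  have "triangulation (p ` I) (cell ` {i\<in>I. z i < 0})"
    using neg.triangulation_positive_cells by simp
  moreover have "T = cell ` {i\<in>I. 0 < z i} \<or> T = cell ` {i\<in>I. z i < 0}"
    if T: "triangulation (p ` I) T" for T
  proof -
    obtain j where j: "j \<in> I" "z j \<noteq> 0" "T = cell ` {i\<in>I. 0 < z j * z i}"
      by (rule triangulation_eq_same_sign_cells[OF T])
    have "{i\<in>I. 0 < z j * z i} = (if 0 < z j then {i\<in>I. 0 < z i} else {i\<in>I. z i < 0})"
      using j(2) by (auto simp: zero_less_mult_iff)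
    with j(3) show ?thesis by simp
  qed
  ultimately show ?thesis using triangulation_positive_cells by blast
qed

lemma positive_cells_ne_negative_cells: "cell ` {i\<in>I. 0 < z i} \<noteq> cell ` {i\<in>I. z i < 0}"
proof
  assume eq: "cell ` {i\<in>I. 0 < z i} = cell ` {i\<in>I. z i < 0}"
  obtain j where j: "j \<in> I" "0 < z j" using exists_positive by blast
  then have "cell j \<in> cell ` {i\<in>I. z i < 0}" using eq by blast
  then obtain k where k: "k \<in> I" "z k < 0" "cell j = cell k" by blast
  then have "j \<noteq> k" using j(2) by auto
  then have "p j \<in> cell j" using point_in_cell[OF j(1), of k] k(3) by simp
  then show False using point_notin_own_cell[OF j(1)] j(2) by simp
qed

section \<open>Regularity\<close>

context
  fixes h :: "'a \<Rightarrow> real"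
begin

definition lift :: "'i \<Rightarrow> 'a \<times> real" where
  "lift i = (p i, h (p i))"

lemma lift_image: "(\<lambda>x. (x, h x)) ` p ` J = lift ` J"
  by (auto simp: lift_def image_image)

lemma inj_on_lift: "inj_on lift I"
  using inj_on_p by (auto simp: inj_on_def lift_def)

lemma fst_convex_hull_lift: "fst ` (convex hull (lift ` J)) = convex hull (p ` J)"
  by (simp add: convex_hull_linear_image[OF linear_fst] image_image lift_def)

lemma inner_lift_omitted:
  assumes j: "j \<in> I" and b: "\<And>i. i \<in> I - {j} \<Longrightarrow> inner w (lift i) = b"
  shows "z j * (inner w (lift j) - b) = snd w * (\<Sum>i\<in>I. z i * h (p i))"
proof -
  obtain a c where w: "w = (a, c)" by fastforce
  have "(\<Sum>i\<in>I. z i * (inner w (lift i) - b))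
      = inner a (\<Sum>i\<in>I. z i *\<^sub>R p i) + c * (\<Sum>i\<in>I. z i * h (p i)) - b * sum z I"
    by (simp add: w lift_def algebra_simps inner_sum_right sum.distrib sum_subtractf sum_distrib_left)
  also have "\<dots> = snd w * (\<Sum>i\<in>I. z i * h (p i))"
    using sum_z dependence by (simp add: w)
  finally show ?thesis
    using b by (simp add: sum.remove[OF finite_I j])
qed

context
  assumes height_pos: "0 < (\<Sum>i\<in>I. z i * h (p i))"
begin

lemma affine_independent_lift: "\<not> affine_dependent (lift ` I)"
proof
  assume "affine_dependent (lift ` I)"
  then obtain d i where d: "sum d I = 0" "(\<Sum>i\<in>I. d i *\<^sub>R lift i) = 0"
    and i: "i \<in> I" "d i \<noteq> 0"
    unfolding affine_dependent_image_iff[OF finite_I inj_on_lift] by blast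
  have "(\<Sum>i\<in>I. d i *\<^sub>R p i) = 0" "(\<Sum>i\<in>I. d i * h (p i)) = 0"
    using arg_cong[OF d(2), of fst] arg_cong[OF d(2), of snd] by (simp_all add: fst_sum snd_sum lift_def)
  moreover obtain c where c: "\<forall>m\<in>I. d m = c * z m"
    using dependence_unique d(1) calculation(1) by blast
  ultimately have "c * (\<Sum>i\<in>I. z i * h (p i)) = 0"
    by (simp add: sum_distrib_left mult.assoc)
  then have "c = 0" using height_pos by simp
  then show False using c i by simp
qed

lemma lift_notin_convex_hull_Diff: "j \<in> I \<Longrightarrow> lift j \<notin> convex hull (lift ` (I - {j}))"
  using affine_independent_lift convex_hull_subset_affine_hull
  by (auto simp: affine_dependent_def inj_on_image_set_diff[OF inj_on_lift])

lemma aff_dim_convex_hull_lift_pos: "0 < aff_dim (convex hull (lift ` I))"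
  using aff_dim_affine_independent[OF affine_independent_lift] card_image[OF inj_on_lift] four_le_card
  by (simp add: aff_dim_convex_hull)

lemma facet_of_convex_hull_lift_iff:
  "F facet_of convex hull (lift ` I) \<longleftrightarrow> (\<exists>j\<in>I. F = convex hull (lift ` (I - {j})))"
proof -
  have "lift ` I - {lift j} \<noteq> {}" if "j \<in> I" for j
  proof -
    obtain i where "i \<in> I" "i \<noteq> j"
      using exists_not_in_if_card_less[of "{j}" I] four_le_card by auto
    then have "lift i \<in> lift ` I - {lift j}" using inj_on_eq_iff[OF inj_on_lift] that by auto
    then show ?thesis by blast
  qed
  then show ?thesis
    unfolding facet_of_convex_hull_affine_independent[OF affine_independent_lift]
    by (auto simp: inj_on_image_set_diff[OF inj_on_lift])
qed

lemma supporting_functional_lift_omitted: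
  assumes j: "j \<in> I" and ge: "\<forall>x\<in>convex hull (lift ` I). b \<le> inner w x"
    and eq: "convex hull (lift ` (I - {j})) = {x\<in>convex hull (lift ` I). inner w x = b}"
  shows "b < inner w (lift j)"
    and "z j * (inner w (lift j) - b) = snd w * (\<Sum>i\<in>I. z i * h (p i))"
proof -
  have "inner w (lift i) = b" if "i \<in> I - {j}" for i
    using eq hull_inc[of "lift i" "lift ` (I - {j})"] that by blast
  then show "z j * (inner w (lift j) - b) = snd w * (\<Sum>i\<in>I. z i * h (p i))"
    by (rule inner_lift_omitted[OF j])
  have "lift j \<in> convex hull (lift ` I)" using j by (intro hull_inc) auto
  then show "b < inner w (lift j)"
    using ge lift_notin_convex_hull_Diff[OF j] eq by (auto simp: order_le_less)
qed

lemma lower_facet_lift_iff: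
  "lower_facet (convex hull (lift ` I)) F \<longleftrightarrow> (\<exists>j\<in>I. 0 < z j \<and> F = convex hull (lift ` (I - {j})))"
  unfolding lower_facet_iff_facet_of[OF aff_dim_convex_hull_lift_pos] facet_of_convex_hull_lift_iff
proof safe
  fix j a c b
  assume j: "j \<in> I" and c: "0 < c" and ge: "\<forall>x\<in>convex hull (lift ` I). b \<le> inner (a, c) x"
    and eq: "convex hull (lift ` (I - {j})) = {x \<in> convex hull (lift ` I). inner (a, c) x = b}"
  have "0 < c * (\<Sum>i\<in>I. z i * h (p i))"
    using c height_pos by (rule mult_pos_pos)
  then have "0 < z j"
    using supporting_functional_lift_omitted[OF j ge eq]
    by (metis diff_gt_0_iff_gt snd_conv zero_less_mult_pos2)
  with j show "\<exists>j'\<in>I. 0 < z j' \<and> convex hull (lift ` (I - {j})) = convex hull (lift ` (I - {j'}))"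
    by blast
next
  fix j assume j: "j \<in> I" "0 < z j"
  then show "\<exists>j'\<in>I. convex hull (lift ` (I - {j})) = convex hull (lift ` (I - {j'}))" by blast
  have "convex hull (lift ` (I - {j})) face_of convex hull (lift ` I)"
    using facet_of_convex_hull_lift_iff j(1) by (auto simp: facet_of_def)
  then obtain u \<beta> where u: "convex hull (lift ` I) \<subseteq> {x. inner u x \<le> \<beta>}"
    "convex hull (lift ` (I - {j})) = convex hull (lift ` I) \<inter> {x. inner u x = \<beta>}"
    using exposed_face_of_polyhedron[OF polyhedron_convex_hull[OF finite_imageI[OF finite_I]]]
    unfolding exposed_face_of_def by blast
  have neg: "inner (- u) x = - inner u x" "inner (fst (- u), snd (- u)) x = - inner u x" for x
    by (simp, metis inner_minus_left prod.collapse)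
  have ge: "\<forall>x\<in>convex hull (lift ` I). - \<beta> \<le> inner (- u) x"
    and eq: "convex hull (lift ` (I - {j})) = {x \<in> convex hull (lift ` I). inner (- u) x = - \<beta>}"
    using u unfolding neg by auto
  have "0 < z j * (inner (- u) (lift j) - - \<beta>)"
    using supporting_functional_lift_omitted(1)[OF j(1) ge eq] j(2) by simp
  then have "0 < snd (- u)"
    using supporting_functional_lift_omitted(2)[OF j(1) ge eq] height_pos
    by (metis zero_less_mult_pos2)
  moreover have "\<forall>x\<in>convex hull (lift ` I). - \<beta> \<le> inner (fst (- u), snd (- u)) x"
    "convex hull (lift ` (I - {j})) = {x \<in> convex hull (lift ` I). inner (fst (- u), snd (- u)) x = - \<beta>}"
    using ge eq by (simp_all only: prod.collapse)
  ultimately show "\<exists>a c b. 0 < c \<and> (\<forall>x\<in>convex hull (lift ` I). b \<le> inner (a, c) x) \<and>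
      convex hull (lift ` (I - {j})) = {x \<in> convex hull (lift ` I). inner (a, c) x = b}"
    by blast
qed

end

end

theorem regular_triangulation_positive_cells:
  "regular_triangulation (p ` I) (cell ` {i\<in>I. 0 < z i})"
proof -
  define h where "h x = z (inv_into I p x)" for x
  have hp: "h (p i) = z i" if "i \<in> I" for i
    using inv_into_f_f[OF inj_on_p that] by (simp add: h_def)
  obtain j where j: "j \<in> I" "0 < z j" using exists_positive by blast
  have "0 < (\<Sum>i\<in>I. z i * z i)"
    using j finite_I by (intro sum_pos2) auto
  then have height_pos: "0 < (\<Sum>i\<in>I. z i * h (p i))" by (simp add: hp)
  have "{F. lower_facet (convex hull ((\<lambda>x. (x, h x)) ` p ` I)) F}
      = (\<lambda>j. convex hull (lift h ` (I - {j}))) ` {i\<in>I. 0 < z i}"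
    unfolding lift_image by (auto simp: lower_facet_lift_iff[OF height_pos])
  then have "cell ` {i\<in>I. 0 < z i}
      = (\<lambda>F. fst ` F) ` {F. lower_facet (convex hull ((\<lambda>x. (x, h x)) ` p ` I)) F}"
    by (simp add: image_image fst_convex_hull_lift cell_def)
  then show ?thesis
    unfolding regular_triangulation_def using triangulation_positive_cells by blast
qed

theorem regular_triangulation_negative_cells:
  "regular_triangulation (p ` I) (cell ` {i\<in>I. z i < 0})"
proof -
  interpret neg: corank_one I p "\<lambda>i. - z i"
    using corank_one_scale[of "-1"] by simp
  show ?thesis using neg.regular_triangulation_positive_cells by simp
qed

end

section \<open>The configuration V_N\<close>

lemma Lambda_values: "lam \<in> Lambda N \<Longrightarrow> i \<in> {1..N} \<Longrightarrow> lam i = 1 \<or> lam i = -1"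
  by (auto simp: Lambda_def)

lemma Lambda_card_eq:
  assumes lam: "lam \<in> Lambda N" and s: "s = 1 \<or> s = -1"
  shows "card {i\<in>{1..N}. lam i = s} = N div 2"
proof -
  define P where "P = {i\<in>{1..N}. lam i = 1}"
  define M where "M = {i\<in>{1..N}. lam i = -1}"
  have cover: "{1..N} = P \<union> M"
  proof (rule set_eqI, rule iffI)
    fix i assume "i \<in> {1..N}"
    then show "i \<in> P \<union> M" using Lambda_values[OF lam, of i] by (auto simp: P_def M_def)
  qed (auto simp: P_def M_def)
  have disj: "P \<inter> M = {}" and fin: "finite P" "finite M"
    by (auto simp: P_def M_def)
  have "card P + card M = N"
    using card_Un_disjoint[OF fin disj] by (simp flip: cover)
  moreover have "(\<Sum>i=1..N. lam i) = sum lam P + sum lam M"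
    using sum.union_disjoint[OF fin disj] cover by simp
  moreover have "sum lam P = real (card P)" "sum lam M = - real (card M)"
    by (simp_all add: P_def M_def)
  moreover have "(\<Sum>i=1..N. lam i) = 0"
    using lam by (simp add: Lambda_def)
  ultimately have "card P = N div 2" "card M = N div 2" by linarith+
  with s show ?thesis by (auto simp: P_def M_def)
qed

lemma vpt_component:
  assumes "inj_on idx {1..n}" "k \<in> {1..n}"
  shows "vpt idx n lam i $ idx k = (if i = Suc k then lam i else if i = k then - lam i else 0)"
proof -
  have "ebasis idx n m $ idx k = (if m = k then 1 else 0)" for m
    using assms by (auto simp: ebasis_def axis_def inj_on_eq_iff)
  then show ?thesis using assms(2) by (cases i) (auto simp: vpt_def)
qed

lemma sum_vpt_component:
  assumes "inj_on idx {1..n}" "k \<in> {1..n}"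
  shows "(\<Sum>i=0..Suc n. d i *\<^sub>R vpt idx n lam i) $ idx k = d (Suc k) * lam (Suc k) - d k * lam k"
proof -
  have "(\<Sum>i=0..Suc n. d i *\<^sub>R vpt idx n lam i) $ idx k
      = (\<Sum>i=0..Suc n. (if i = Suc k then d i * lam i else 0) - (if i = k then d i * lam i else 0))"
    using assms by (auto simp: vpt_component intro!: sum.cong)
  also have "\<dots> = d (Suc k) * lam (Suc k) - d k * lam k"
    using assms(2) by (simp add: sum_subtractf)
  finally show ?thesis .
qed

lemma vpt_linear_dependence:
  assumes "inj_on idx {1..n}" and d: "(\<Sum>i=0..Suc n. d i *\<^sub>R vpt idx n lam i) = 0"
    and i: "i \<in> {1..Suc n}"
  shows "d i * lam i = d 1 * lam 1"
proof -
  have step: "d (Suc k) * lam (Suc k) = d k * lam k" if "k \<in> {1..n}" for k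
    using sum_vpt_component[OF assms(1) that, of d lam] unfolding d by simp
  have "1 \<le> i" using i by simp
  then have "i \<le> Suc n \<longrightarrow> d i * lam i = d 1 * lam 1"
    by (induction i rule: nat_induct_at_least) (auto simp: step)
  with i show ?thesis by simp
qed

lemma corank_one_vpt:
  assumes N: "4 \<le> N" and idx: "bij_betw idx {1..N - 1} (UNIV :: 'n::finite set)"
    and lam: "lam \<in> Lambda N"
  shows "corank_one {0..N} (vpt idx (N - 1) lam) (\<lambda>i. if i = 0 then 0 else lam i)"
proof -
  define n where "n = N - 1"
  have n: "N = Suc n" using N by (simp add: n_def)
  have inj: "inj_on idx {1..n}" using bij_betw_imp_inj_on[OF idx] by (simp add: n_def)
  have surj: "idx ` {1..n} = UNIV" using bij_betw_imp_surj_on[OF idx] by (simp add: n_def)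
  have lam_sign: "lam i * lam i = 1" "0 < lam i \<longleftrightarrow> lam i = 1" "lam i < 0 \<longleftrightarrow> lam i = -1"
    if "i \<in> {1..N}" for i
    using Lambda_values[OF lam that] by auto
  have sum_lam: "(\<Sum>i=1..N. lam i) = 0" using lam by (simp add: Lambda_def)
  define z where "z i = (if i = 0 then 0 else lam i)" for i
  show ?thesis
    unfolding z_def[symmetric]
  proof
    show "finite {0..N}" by simp
    show "sum z {0..N} = 0" using sum_lam by (simp add: sum.atLeast_Suc_atMost z_def)
    have comp: "(\<Sum>i=0..N. z i *\<^sub>R vpt idx (N - 1) lam i) $ idx k = 0" if k: "k \<in> {1..n}" for k
      using sum_vpt_component[OF inj k, of z lam] lam_sign(1)[of k] lam_sign(1)[of "Suc k"] k
      by (simp add: n z_def)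
    show "(\<Sum>i=0..N. z i *\<^sub>R vpt idx (N - 1) lam i) = 0"
    proof (rule vec_eq_iff[THEN iffD2], rule allI)
      fix j :: 'n
      from surj obtain k where "k \<in> {1..n}" "j = idx k" by (metis UNIV_I imageE)
      with comp show "(\<Sum>i=0..N. z i *\<^sub>R vpt idx (N - 1) lam i) $ j = 0 $ j" by simp
    qed
  next
    fix d assume d: "sum d {0..N} = 0" "(\<Sum>i=0..N. d i *\<^sub>R vpt idx (N - 1) lam i) = 0"
    define c where "c = d 1 * lam 1"
    have d2: "(\<Sum>i=0..Suc n. d i *\<^sub>R vpt idx n lam i) = 0"
      using d(2) by (simp only: n diff_Suc_1)
    have d_lam: "d i = c * lam i" if i: "i \<in> {1..N}" for i
    proof -
      have "d i * lam i = c"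
        using vpt_linear_dependence[OF inj d2, of i] i by (simp add: c_def n)
      then show ?thesis using lam_sign(1)[OF i] by (metis mult.assoc mult_1_right)
    qed
    have "sum d {0..N} = d 0 + (\<Sum>i=1..N. c * lam i)"
      using d_lam by (simp add: sum.atLeast_Suc_atMost)
    then have "d 0 = 0"
      using d(1) sum_lam by (simp flip: sum_distrib_left)
    with d_lam show "\<exists>c. \<forall>i\<in>{0..N}. d i = c * z i"
      by (intro exI[of _ c]) (auto simp: z_def)
  next
    have "{i\<in>{0..N}. 0 < z i} = {i\<in>{1..N}. lam i = 1}" "{i\<in>{0..N}. z i < 0} = {i\<in>{1..N}. lam i = -1}"
      using lam_sign by (force simp: z_def)+
    then show "2 \<le> card {i\<in>{0..N}. 0 < z i}" "2 \<le> card {i\<in>{0..N}. z i < 0}"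
      using Lambda_card_eq[OF lam] N by simp_all
  qed
qed

theorem lemma5p3:
  fixes idx :: "nat \<Rightarrow> 'n::finite" and N :: nat and lam :: "nat \<Rightarrow> real"
  assumes "even N" and "N \<ge> 4" and "CARD('n) + 1 = N"
    and "bij_betw idx {1..N - 1} (UNIV :: 'n set)"
    and "lam \<in> Lambda N"
  defines "V \<equiv> vpt idx (N - 1) lam ` {0..N}"
  defines "Tplus \<equiv> {convex hull (V - {vpt idx (N - 1) lam i}) | i. 1 \<le> i \<and> i \<le> N \<and> lam i = lam 1}"
  defines "Tminus \<equiv> {convex hull (V - {vpt idx (N - 1) lam i}) | i. 1 \<le> i \<and> i \<le> N \<and> lam i = - lam 1}"
  shows "{T. triangulation V T} = {Tplus, Tminus} \<and> Tplus \<noteq> Tminus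
         \<and> regular_triangulation V Tplus \<and> regular_triangulation V Tminus"
proof -
  have lam1: "lam 1 = 1 \<or> lam 1 = -1" using Lambda_values[OF assms(5)] assms(2) by simp
  then have "lam 1 \<noteq> 0" by auto
  define z where "z i = lam 1 * (if i = 0 then 0 else lam i)" for i
  interpret corank_one "{0..N}" "vpt idx (N - 1) lam" z
    unfolding z_def by (rule corank_one.corank_one_scale[OF corank_one_vpt[OF assms(2,4,5)] \<open>lam 1 \<noteq> 0\<close>])
  have classes: "1 \<le> i \<and> i \<le> N \<and> lam i = s * lam 1 \<longleftrightarrow> i \<in> {0..N} \<and> 0 < s * z i"
    if "s = 1 \<or> s = -1" for i s
    by (cases "i \<in> {1..N}") (use Lambda_values[OF assms(5), of i] lam1 that in \<open>auto simp: z_def\<close>)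
  have "Tplus = cell ` {i\<in>{0..N}. 0 < z i}" "Tminus = cell ` {i\<in>{0..N}. z i < 0}"
    unfolding Tplus_def Tminus_def V_def
    using classes[where s = 1] classes[where s = "-1"] setcompr_convex_hull_Diff_eq_cells by simp_all
  then show ?thesis
    using triangulations_eq positive_cells_ne_negative_cells
      regular_triangulation_positive_cells regular_triangulation_negative_cells
    by (simp add: V_def)
qed

end
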